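(* For every $n\ge 4$, the number of strongly magic quad squares that can be made using the cards of the EvenQuads-$2^n$ deck is $2^n(2^n-1)(2^n-2)(2^n-4)(2^n-8)$.
   Context: The EvenQuads-$2^n$ deck consists of $2^n$ cards identified with the integers $0,1,\dots,2^n-1$ (equivalently with $\mathbb{Z}_2^n$ via binary expansion). Four cards $a,b,c,d$ form a quad if and only if $a\oplus b\oplus c\oplus d=0$, where $\oplus$ is bitwise XOR. A quad square is a $4\times4$ array of $16$ pairwise distinct cards. Index rows and columns by $0,1,2,3$; a quad square is strongly magic if for any four distinct positions $(i_1,j_1),\dots,(i_4,j_4)$ with $i_1\oplus i_2\oplus i_3\oplus i_4=0$ and $j_1\oplus j_2\oplus j_3\oplus j_4=0$, the four cards in these positions form a quad. *)

theory Defs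
  imports Main "HOL-Library.FuncSet"
begin

text \<open>Cards of the EvenQuads-2^n deck are the naturals 0..2^n-1; XOR is the bitwise xor on nat.\<close>

definition is_quad :: "nat \<Rightarrow> nat \<Rightarrow> nat \<Rightarrow> nat \<Rightarrow> bool" where
  "is_quad a b c d \<longleftrightarrow> xor (xor (xor a b) c) d = 0"

definition positions :: "(nat \<times> nat) set" where
  "positions = {0..<4} \<times> {0..<4}"

definition quad_squares :: "nat \<Rightarrow> (nat \<times> nat \<Rightarrow> nat) set" where
  "quad_squares n = {Q \<in> positions \<rightarrow>\<^sub>E {..<2^n}. inj_on Q positions}"

definition strongly_magic :: "(nat \<times> nat \<Rightarrow> nat) \<Rightarrow> bool" where
  "strongly_magic Q \<longleftrightarrow>
    (\<forall>p1 p2 p3 p4. p1 \<in> positions \<and> p2 \<in> positions \<and> p3 \<in> positions \<and> p4 \<in> positions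
       \<and> distinct [p1, p2, p3, p4]
       \<and> xor (xor (xor (fst p1) (fst p2)) (fst p3)) (fst p4) = 0
       \<and> xor (xor (xor (snd p1) (snd p2)) (snd p3)) (snd p4) = 0
       \<longrightarrow> is_quad (Q p1) (Q p2) (Q p3) (Q p4))"

end

theory Submission
  imports Defs
begin

(* A strongly magic square Q is an injective affine map from the grid of positions,
   read as \<Z>\<^sub>2\<^sup>2 \<times> \<Z>\<^sub>2\<^sup>2, into the deck \<Z>\<^sub>2\<^sup>n: the quads formed by a row, by a column and by
   the corners of a rectangle through (0,0) force Q(i,j) = c + r(i) + s(j) with r, s linear,
   and conversely every affine map sends the quads of the grid to quads. Such a square is
   determined by its corner c and by the images of the four unit positions, which must be
   linearly independent; choosing c and then an independent 4-tuple gives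
   2^n (2^n - 1)(2^n - 2)(2^n - 4)(2^n - 8) squares. *)

lemma xor_div_2_nat: "xor m n div 2 = xor (m div 2) (n div 2)" for m n :: nat
  by (subst xor_nat_rec) simp

lemma odd_xor_nat_iff: "odd (xor m n) \<longleftrightarrow> odd m \<noteq> odd n" for m n :: nat
  using even_xor_iff[of m n] by auto

lemma xor_left_self_nat [simp]: "xor a (xor a b) = b" for a b :: nat
  by (simp flip: xor.assoc)

lemma xor_left_inject_nat [simp]: "xor a b = xor a c \<longleftrightarrow> b = c" for a b c :: nat
  by (metis xor_left_self_nat)

lemma xor_eq_0_iff_nat: "xor a b = 0 \<longleftrightarrow> a = b" for a b :: nat
  by (metis xor_left_self_nat xor.comm_neutral xor_self_eq)

lemma xor_less_power_nat: "a < 2^n \<Longrightarrow> b < 2^n \<Longrightarrow> xor a b < (2::nat)^n" for a b :: nat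
  by (metis take_bit_nat_eq_self_iff take_bit_xor)

lemma is_quad_iff_last: "is_quad a b c d \<longleftrightarrow> d = xor (xor a b) c"
  unfolding is_quad_def by (metis xor_eq_0_iff_nat)

lemma is_quad_const: "is_quad c c c c"
  by (simp add: is_quad_def)

lemma is_quad_xor:
  assumes "is_quad a b c d" and "is_quad a' b' c' d'"
  shows "is_quad (xor a a') (xor b b') (xor c c') (xor d d')"
proof -
  have "xor (xor (xor (xor a a') (xor b b')) (xor c c')) (xor d d')
      = xor (xor (xor (xor a b) c) d) (xor (xor (xor a' b') c') d')"
    by (simp add: ac_simps)
  then show ?thesis
    using assms by (simp add: is_quad_def)
qed

(* xor_comb xs is the linear map \<Z>\<^sub>2\<^sup>k \<rightarrow> \<Z>\<^sub>2\<^sup>n sending the unit vector 2^i to xs ! i. *)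
fun xor_comb :: "nat list \<Rightarrow> nat \<Rightarrow> nat" where
  "xor_comb [] m = 0"
| "xor_comb (x # xs) m = xor (if odd m then x else 0) (xor_comb xs (m div 2))"

lemma xor_comb_0 [simp]: "xor_comb xs 0 = 0"
  by (induction xs) auto

lemma xor_comb_xor: "xor_comb xs (xor m m') = xor (xor_comb xs m) (xor_comb xs m')"
  by (induction xs arbitrary: m m') (simp_all add: xor_div_2_nat odd_xor_nat_iff ac_simps)

lemma xor_comb_less: "set xs \<subseteq> {..<2^n} \<Longrightarrow> xor_comb xs m < 2^n"
  by (induction xs arbitrary: m) (auto intro!: xor_less_power_nat)

lemma xor_comb_append:
  "i < 2^length ys \<Longrightarrow> xor_comb (ys @ zs) (i + 2^length ys * j) = xor (xor_comb ys i) (xor_comb zs j)"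
proof (induction ys arbitrary: i)
  case Nil
  then show ?case by simp
next
  case (Cons y ys)
  have "odd (i + 2^length (y # ys) * j) = odd i"
    and "(i + 2^length (y # ys) * j) div 2 = i div 2 + 2^length ys * j"
    by simp_all
  moreover have "i div 2 < 2^length ys"
    using Cons.prems by auto
  ultimately show ?case
    using Cons.IH[of "i div 2"] by (simp add: ac_simps)
qed

lemma is_quad_xor_comb:
  "is_quad i j k l \<Longrightarrow> is_quad (xor_comb xs i) (xor_comb xs j) (xor_comb xs k) (xor_comb xs l)"
  by (simp add: is_quad_def flip: xor_comb_xor)

definition xor_independent :: "nat list \<Rightarrow> bool" where
  "xor_independent xs \<longleftrightarrow> (\<forall>m < 2^length xs. xor_comb xs m = 0 \<longrightarrow> m = 0)"

definition xor_span :: "nat list \<Rightarrow> nat set" where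
  "xor_span xs = xor_comb xs ` {..<2^length xs}"

lemma xor_independent_iff_inj_on: "xor_independent xs \<longleftrightarrow> inj_on (xor_comb xs) {..<2^length xs}"
proof
  assume indep: "xor_independent xs"
  show "inj_on (xor_comb xs) {..<2^length xs}"
  proof (rule inj_onI)
    fix m m' assume m: "m \<in> {..<2^length xs}" "m' \<in> {..<2^length xs}"
      and "xor_comb xs m = xor_comb xs m'"
    then have "xor_comb xs (xor m m') = 0"
      by (simp add: xor_comb_xor)
    moreover have "xor m m' < 2^length xs"
      using m by (auto intro: xor_less_power_nat)
    ultimately have "xor m m' = 0"
      using indep by (simp add: xor_independent_def)
    then show "m = m'"
      by (simp add: xor_eq_0_iff_nat)
  qed
next
  assume "inj_on (xor_comb xs) {..<2^length xs}"
  then show "xor_independent xs"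
    unfolding xor_independent_def using inj_onD[of "xor_comb xs" _ _ 0] by simp
qed

lemma card_xor_span: "xor_independent xs \<Longrightarrow> card (xor_span xs) = 2^length xs"
  by (simp add: xor_span_def card_image xor_independent_iff_inj_on)

lemma xor_span_subset: "set xs \<subseteq> {..<2^n} \<Longrightarrow> xor_span xs \<subseteq> {..<2^n}"
  by (auto simp: xor_span_def xor_comb_less)

lemma xor_independent_Cons:
  "xor_independent (x # xs) \<longleftrightarrow> xor_independent xs \<and> x \<notin> xor_span xs"
proof
  assume indep: "xor_independent (x # xs)"
  have "m = 0" if "m < 2^length xs" "xor_comb xs m = 0" for m
  proof -
    have "xor_comb (x # xs) (2 * m) = 0" "2 * m < 2^length (x # xs)"
      using that by simp_all
    then have "2 * m = 0"
      using indep unfolding xor_independent_def by blast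
    then show "m = 0"
      by simp
  qed
  moreover have "x \<noteq> xor_comb xs m" if "m < 2^length xs" for m
  proof
    assume "x = xor_comb xs m"
    then have "xor_comb (x # xs) (2 * m + 1) = 0"
      by simp
    moreover have "2 * m + 1 < 2^length (x # xs)"
      using that by simp
    ultimately show False
      using indep by (auto simp: xor_independent_def)
  qed
  ultimately show "xor_independent xs \<and> x \<notin> xor_span xs"
    by (auto simp: xor_independent_def xor_span_def)
next
  assume indep: "xor_independent xs \<and> x \<notin> xor_span xs"
  show "xor_independent (x # xs)"
    unfolding xor_independent_def
  proof (intro allI impI)
    fix m assume m: "m < 2^length (x # xs)" "xor_comb (x # xs) m = 0"
    have half: "m div 2 < 2^length xs"
      using m(1) by auto
    show "m = 0"
    proof (cases "odd m")
      case True
      then have "x = xor_comb xs (m div 2)"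
        using m(2) by (simp add: xor_eq_0_iff_nat)
      then show ?thesis
        using indep half by (auto simp: xor_span_def)
    next
      case False
      then have "xor_comb xs (m div 2) = 0"
        using m(2) by simp
      then show ?thesis
        using False indep half by (auto simp: xor_independent_def)
    qed
  qed
qed

definition independent_lists :: "nat \<Rightarrow> nat \<Rightarrow> nat list set" where
  "independent_lists n k = {xs. length xs = k \<and> set xs \<subseteq> {..<2^n} \<and> xor_independent xs}"

lemma finite_independent_lists: "finite (independent_lists n k)"
  by (rule finite_subset[OF _ finite_lists_length_eq[of "{..<(2::nat)^n}" k]])
    (auto simp: independent_lists_def)

lemma independent_lists_Suc:
  "independent_lists n (Suc k)
     = (\<lambda>(xs, x). x # xs) ` (SIGMA xs:independent_lists n k. {..<2^n} - xor_span xs)"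
proof
  show "independent_lists n (Suc k)
      \<subseteq> (\<lambda>(xs, x). x # xs) ` (SIGMA xs:independent_lists n k. {..<2^n} - xor_span xs)"
  proof
    fix ys assume "ys \<in> independent_lists n (Suc k)"
    then obtain x xs where "ys = x # xs" and "(xs, x) \<in> (SIGMA xs:independent_lists n k. {..<2^n} - xor_span xs)"
      by (auto simp: independent_lists_def length_Suc_conv xor_independent_Cons)
    then show "ys \<in> (\<lambda>(xs, x). x # xs) ` (SIGMA xs:independent_lists n k. {..<2^n} - xor_span xs)"
      by force
  qed
qed (auto simp: independent_lists_def xor_independent_Cons)

lemma card_independent_lists: "card (independent_lists n k) = (\<Prod>i<k. 2^n - 2^i)"
proof (induction k)
  case 0
  have "independent_lists n 0 = {[]}"
    by (auto simp: independent_lists_def xor_independent_def)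
  then show ?case by simp
next
  case (Suc k)
  have "card (independent_lists n (Suc k))
      = card (SIGMA xs:independent_lists n k. {..<2^n} - xor_span xs)"
    unfolding independent_lists_Suc by (rule card_image) (auto simp: inj_on_def)
  also have "\<dots> = (\<Sum>xs\<in>independent_lists n k. card ({..<2^n} - xor_span xs))"
    by (rule card_SigmaI) (auto simp: finite_independent_lists)
  also have "\<dots> = (\<Sum>xs\<in>independent_lists n k. 2^n - 2^k)"
  proof (rule sum.cong)
    fix xs assume "xs \<in> independent_lists n k"
    then have "xor_span xs \<subseteq> {..<2^n}" "card (xor_span xs) = 2^k"
      by (auto simp: independent_lists_def xor_span_subset card_xor_span)
    then show "card ({..<2^n} - xor_span xs) = 2^n - 2^k"
      by (simp add: card_Diff_subset finite_subset)
  qed simp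
  finally show ?case
    using Suc by simp
qed

definition affine_square :: "nat \<Rightarrow> nat list \<Rightarrow> nat \<times> nat \<Rightarrow> nat" where
  "affine_square c xs = restrict
     (\<lambda>p. xor c (xor (xor_comb (take 2 xs) (fst p)) (xor_comb (drop 2 xs) (snd p)))) positions"

lemma mem_positions_iff: "(i, j) \<in> positions \<longleftrightarrow> i < 4 \<and> j < 4"
  by (auto simp: positions_def)

lemma affine_square_eq_xor_comb:
  assumes "length xs = 4" and "(i, j) \<in> positions"
  shows "affine_square c xs (i, j) = xor c (xor_comb xs (i + 4 * j))"
  using assms xor_comb_append[of i "take 2 xs" "drop 2 xs" j]
  by (simp add: affine_square_def mem_positions_iff)

lemma affine_square_in_PiE:
  "c < 2^n \<Longrightarrow> set xs \<subseteq> {..<2^n} \<Longrightarrow> affine_square c xs \<in> positions \<rightarrow>\<^sub>E {..<2^n}"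
  using set_take_subset[of 2 xs] set_drop_subset[of 2 xs]
  by (auto simp: affine_square_def intro!: xor_less_power_nat xor_comb_less)

lemma strongly_magic_affine_square: "strongly_magic (affine_square c xs)"
  unfolding strongly_magic_def
proof (intro allI impI, elim conjE)
  fix p1 p2 p3 p4 :: "nat \<times> nat"
  assume "p1 \<in> positions" "p2 \<in> positions" "p3 \<in> positions" "p4 \<in> positions"
    and "xor (xor (xor (fst p1) (fst p2)) (fst p3)) (fst p4) = 0"
    and "xor (xor (xor (snd p1) (snd p2)) (snd p3)) (snd p4) = 0"
  then show "is_quad (affine_square c xs p1) (affine_square c xs p2)
      (affine_square c xs p3) (affine_square c xs p4)"
    unfolding affine_square_def
    by (simp add: is_quad_xor is_quad_const is_quad_xor_comb is_quad_def[symmetric])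
qed

lemma bij_betw_positions_index: "bij_betw (\<lambda>(i, j). i + 4 * j) positions {..<16}"
  by (rule bij_betwI[where g = "\<lambda>m. (m mod 4, m div 4)"]) (auto simp: positions_def)

lemma inj_on_affine_square_iff:
  assumes len: "length xs = 4"
  shows "inj_on (affine_square c xs) positions \<longleftrightarrow> xor_independent xs"
proof -
  have index: "inj_on (\<lambda>(i, j). i + 4 * j) positions"
    "(\<lambda>(i, j). i + 4 * j) ` positions = {..<2^length xs}"
    using bij_betw_positions_index len by (simp_all add: bij_betw_def)
  have "inj_on (affine_square c xs) positions
      \<longleftrightarrow> inj_on ((\<lambda>m. xor c (xor_comb xs m)) \<circ> (\<lambda>(i, j). i + 4 * j)) positions"
    by (rule inj_on_cong) (auto simp: affine_square_eq_xor_comb len)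
  also have "\<dots> \<longleftrightarrow> inj_on (\<lambda>m. xor c (xor_comb xs m)) {..<2^length xs}"
    using comp_inj_on_iff[OF index(1)] index(2) by metis
  also have "\<dots> \<longleftrightarrow> xor_independent xs"
    by (simp add: xor_independent_iff_inj_on inj_on_def)
  finally show ?thesis .
qed

lemma affine_square_corner: "affine_square c xs (0, 0) = c"
  by (simp add: affine_square_def mem_positions_iff)

lemma affine_square_units:
  assumes "length xs = 4"
  shows "map (\<lambda>p. xor c (affine_square c xs p)) [(1, 0), (2, 0), (0, 1), (0, 2)] = xs"
proof -
  obtain a b d e where "xs = [a, b, d, e]"
    using assms by (auto simp: length_Suc_conv numeral_eq_Suc)
  then show ?thesis
    by (simp add: affine_square_def mem_positions_iff)
qed

lemma inj_on_affine_square_params: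
  "inj_on (\<lambda>(c, xs). affine_square c xs) (UNIV \<times> {xs. length xs = 4})"
proof (rule inj_onI, clarify)
  fix c c' :: nat and xs xs' :: "nat list"
  assume "length xs = 4" "length xs' = 4" and "affine_square c xs = affine_square c' xs'"
  then show "c = c' \<and> xs = xs'"
    by (metis affine_square_corner affine_square_units)
qed

lemma strongly_magic_quad_last:
  assumes "strongly_magic Q" and "{p1, p2, p3, p4} \<subseteq> positions" and "distinct [p1, p2, p3, p4]"
    and "is_quad (fst p1) (fst p2) (fst p3) (fst p4)" and "is_quad (snd p1) (snd p2) (snd p3) (snd p4)"
  shows "Q p4 = xor (xor (Q p1) (Q p2)) (Q p3)"
proof -
  have "is_quad (Q p1) (Q p2) (Q p3) (Q p4)"
    using assms unfolding strongly_magic_def is_quad_def by blast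
  then show ?thesis
    by (simp add: is_quad_iff_last)
qed

lemma strongly_magic_eq_affine_square:
  assumes magic: "strongly_magic Q" and ext: "Q \<in> extensional positions"
  defines "c \<equiv> Q (0, 0)"
  shows "Q = affine_square c (map (\<lambda>p. xor c (Q p)) [(1, 0), (2, 0), (0, 1), (0, 2)])"
proof -
  have row3: "Q (3, 0) = xor (xor c (Q (1, 0))) (Q (2, 0))"
    and col3: "Q (0, 3) = xor (xor c (Q (0, 1))) (Q (0, 2))"
    unfolding c_def by (rule strongly_magic_quad_last[OF magic]; simp add: is_quad_def mem_positions_iff)+
  have cases4: "i = 0 \<or> i = 1 \<or> i = 2 \<or> i = 3" if "i < 4" for i :: nat
    using that by auto
  have row: "xor_comb [xor c (Q (1, 0)), xor c (Q (2, 0))] i = xor c (Q (i, 0))" if "i < 4" for i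
    using cases4[OF that] row3 by (elim disjE) (simp_all add: c_def ac_simps)
  have col: "xor_comb [xor c (Q (0, 1)), xor c (Q (0, 2))] j = xor c (Q (0, j))" if "j < 4" for j
    using cases4[OF that] col3 by (elim disjE) (simp_all add: c_def ac_simps)
  have rect: "Q (i, j) = xor (xor c (Q (i, 0))) (Q (0, j))" if "i < 4" "j < 4" for i j
  proof (cases "i = 0 \<or> j = 0")
    case True
    then show ?thesis
      by (auto simp: c_def ac_simps)
  next
    case False
    then show ?thesis
      unfolding c_def using that
      by (intro strongly_magic_quad_last[OF magic]) (auto simp: is_quad_def mem_positions_iff)
  qed
  show ?thesis
  proof (rule extensionalityI[OF ext])
    show "affine_square c (map (\<lambda>p. xor c (Q p)) [(1, 0), (2, 0), (0, 1), (0, 2)]) \<in> extensional positions"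
      by (simp add: affine_square_def)
  next
    fix p assume "p \<in> positions"
    then obtain i j where "p = (i, j)" "i < 4" "j < 4"
      by (auto simp: positions_def)
    then have "Q p = xor c (xor (xor c (Q (i, 0))) (xor c (Q (0, j))))"
      using rect[of i j] by (simp add: ac_simps)
    also have "\<dots> = affine_square c (map (\<lambda>p. xor c (Q p)) [(1, 0), (2, 0), (0, 1), (0, 2)]) p"
      using row col \<open>p = (i, j)\<close> \<open>i < 4\<close> \<open>j < 4\<close> by (simp add: affine_square_def mem_positions_iff)
    finally show "Q p = affine_square c (map (\<lambda>p. xor c (Q p)) [(1, 0), (2, 0), (0, 1), (0, 2)]) p" .
  qed
qed

lemma strongly_magic_quad_squares_eq:
  "{Q \<in> quad_squares n. strongly_magic Q}
     = (\<lambda>(c, xs). affine_square c xs) ` ({..<2^n} \<times> independent_lists n 4)"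
proof
  show "(\<lambda>(c, xs). affine_square c xs) ` ({..<2^n} \<times> independent_lists n 4)
      \<subseteq> {Q \<in> quad_squares n. strongly_magic Q}"
    using affine_square_in_PiE
    by (fastforce simp: quad_squares_def independent_lists_def inj_on_affine_square_iff
        strongly_magic_affine_square)
next
  show "{Q \<in> quad_squares n. strongly_magic Q}
      \<subseteq> (\<lambda>(c, xs). affine_square c xs) ` ({..<2^n} \<times> independent_lists n 4)"
  proof (clarify)
    fix Q assume "Q \<in> quad_squares n" and magic: "strongly_magic Q"
    then have range: "Q \<in> positions \<rightarrow>\<^sub>E {..<2^n}" and inj: "inj_on Q positions"
      by (auto simp: quad_squares_def)
    define c where "c = Q (0, 0)"
    define xs where "xs = map (\<lambda>p. xor c (Q p)) [(1, 0), (2, 0), (0, 1), (0, 2)]"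
    have "Q \<in> extensional positions"
      using range by (simp add: PiE_iff)
    then have Q: "Q = affine_square c xs"
      unfolding c_def xs_def by (rule strongly_magic_eq_affine_square[OF magic])
    have "Q (i, j) < 2^n" if "i < 4" "j < 4" for i j
      using range that by (auto simp: mem_positions_iff)
    then have "c < 2^n" "set xs \<subseteq> {..<2^n}"
      by (simp_all add: c_def xs_def xor_less_power_nat)
    moreover have "length xs = 4"
      by (simp add: xs_def)
    moreover from this have "xor_independent xs"
      using inj by (simp add: Q inj_on_affine_square_iff)
    ultimately show "Q \<in> (\<lambda>(c, xs). affine_square c xs) ` ({..<2^n} \<times> independent_lists n 4)"
      using Q by (auto simp: independent_lists_def)
  qed
qed

theorem mainTheorem3:
  fixes n :: nat
  assumes "n \<ge> 4"
  shows "card {Q \<in> quad_squares n. strongly_magic Q}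
           = 2^n * (2^n - 1) * (2^n - 2) * (2^n - 4) * (2^n - 8)"
proof -
  have "inj_on (\<lambda>(c, xs). affine_square c xs) ({..<2^n} \<times> independent_lists n 4)"
    by (rule inj_on_subset[OF inj_on_affine_square_params]) (auto simp: independent_lists_def)
  then have "card {Q \<in> quad_squares n. strongly_magic Q} = card ({..<(2::nat)^n} \<times> independent_lists n 4)"
    by (simp add: strongly_magic_quad_squares_eq card_image)
  also have "\<dots> = 2^n * (\<Prod>i<4. 2^n - 2^i)"
    by (simp add: card_cartesian_product card_independent_lists)
  also have "\<dots> = 2^n * (2^n - 1) * (2^n - 2) * (2^n - 4) * (2^n - 8)"
    by (simp add: numeral_eq_Suc lessThan_Suc mult_ac)
  finally show ?thesis .
qed

end
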